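(* If $K\subset\mathbb{X}$ is compact, then $\eta(K)=0$ if and only if $\lim_{\varepsilon\to0}\tau(B_\varepsilon(K))=0$.
   Context: $\mathbb{X}$ is a compact metric space. $(\xi_j)_{j\in\mathbb N}$ is a sequence of finitely additive outer probabilities on $\mathbb{X}$ (set functions on all subsets, values in $[0,1]$, finitely additive, $\xi_j(\mathbb{X})=1$). For $A\subset\mathbb{X}$, $\tau(A)=\limsup_{n\to\infty}\frac1n\sum_{j=0}^{n-1}\xi_j(A)$. For $Y\subset\mathbb{X}$ and $r>0$, $\nu_r(Y)=\inf\sum_{I\in\mathcal I}\tau(I)$ over all countable covers $\mathcal I$ of $Y$ by open sets of diameter at most $r$; $\nu(Y)=\sup_{r>0}\nu_r(Y)$; $\eta$ is the restriction of $\nu$ to the Borel $\sigma$-algebra (a countably additive Borel measure). $B_\varepsilon(K)$ is the open $\varepsilon$-neighborhood of $K$. *)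

theory Defs
  imports "HOL-Analysis.Analysis"
begin

definition fa_outer_prob :: "('a set \<Rightarrow> real) \<Rightarrow> bool" where
  "fa_outer_prob \<xi> \<longleftrightarrow>
     (\<forall>A. 0 \<le> \<xi> A \<and> \<xi> A \<le> 1) \<and>
     (\<forall>A B. A \<inter> B = {} \<longrightarrow> \<xi> (A \<union> B) = \<xi> A + \<xi> B) \<and>
     \<xi> UNIV = 1"

text \<open>tau(A) = limsup_n (1/n) sum_{j<n} xi_j(A); the averages lie in [0,1], so the
  (ereal) limsup is finite and we take its real value.\<close>
definition tau :: "(nat \<Rightarrow> 'a set \<Rightarrow> real) \<Rightarrow> 'a set \<Rightarrow> real" where
  "tau \<xi> A = real_of_ereal
     (limsup (\<lambda>n. ereal ((1 / real n) * (\<Sum>j<n. \<xi> j A))))"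

definition nu_r :: "(nat \<Rightarrow> 'a::metric_space set \<Rightarrow> real) \<Rightarrow> real \<Rightarrow> 'a set \<Rightarrow> ennreal" where
  "nu_r \<xi> r Y = Inf { (\<Sum>\<^sub>\<infinity> I\<in>\<I>. ennreal (tau \<xi> I)) | \<I>.
       countable \<I> \<and> (\<forall>I\<in>\<I>. open I \<and> diameter I \<le> r) \<and> Y \<subseteq> \<Union>\<I> }"

definition nu :: "(nat \<Rightarrow> 'a::metric_space set \<Rightarrow> real) \<Rightarrow> 'a set \<Rightarrow> ennreal" where
  "nu \<xi> Y = (SUP r\<in>{0<..}. nu_r \<xi> r Y)"

definition eta :: "(nat \<Rightarrow> 'a::metric_space set \<Rightarrow> real) \<Rightarrow> 'a set \<Rightarrow> ennreal" where
  "eta \<xi> A = (if A \<in> sets borel then nu \<xi> A else 0)"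

definition nbhd :: "real \<Rightarrow> 'a::metric_space set \<Rightarrow> 'a set" where
  "nbhd \<epsilon> K = {x. \<exists>k\<in>K. dist x k < \<epsilon>}"

end

theory Submission
  imports Defs
begin

text \<open>Both directions rest on compactness of \<open>K\<close> and finite subadditivity of \<open>\<tau>\<close>.
  If \<open>\<nu>\<^sub>r(K) = 0\<close>, a cheap countable cover of \<open>K\<close> by open sets has a finite subcover,
  whose union has small \<open>\<tau>\<close> and contains some neighbourhood \<open>B\<^sub>\<epsilon>(K)\<close>.
  Conversely, \<open>K\<close> is covered by \<open>N\<close> balls of radius \<open>r/2\<close>; intersecting them with
  \<open>B\<^sub>\<epsilon>(K)\<close> gives admissible covers, so \<open>\<nu>\<^sub>r(K) \<le> N \<tau>(B\<^sub>\<epsilon>(K)) \<rightarrow> 0\<close>.\<close>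

lemma fa_outer_prob_empty: assumes "fa_outer_prob m" shows "m {} = 0"
  using assms unfolding fa_outer_prob_def by (metis Un_empty inf_bot_left add_cancel_left_left)

lemma fa_outer_prob_mono: assumes "fa_outer_prob m" "A \<subseteq> B" shows "m A \<le> m B"
proof -
  have "m B = m A + m (B - A)" using assms unfolding fa_outer_prob_def
    by (metis Diff_disjoint Un_Diff_cancel2 sup.absorb_iff1 sup_commute)
  moreover have "0 \<le> m (B - A)" using assms unfolding fa_outer_prob_def by auto
  ultimately show ?thesis by simp
qed

lemma fa_outer_prob_Un_le: assumes "fa_outer_prob m" shows "m (A \<union> B) \<le> m A + m B"
proof -
  have "m (A \<union> B) = m A + m (B - A)" using assms unfolding fa_outer_prob_def
    by (metis Diff_disjoint Un_Diff_cancel)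
  moreover have "m (B - A) \<le> m B" using fa_outer_prob_mono[OF assms] by auto
  ultimately show ?thesis by simp
qed

definition cesaro_mean :: "(nat \<Rightarrow> 'a set \<Rightarrow> real) \<Rightarrow> 'a set \<Rightarrow> nat \<Rightarrow> real" where
  "cesaro_mean \<xi> A n = (1 / real n) * (\<Sum>j<n. \<xi> j A)"

lemma cesaro_mean_bounds:
  assumes "\<And>j. fa_outer_prob (\<xi> j)"
  shows "0 \<le> cesaro_mean \<xi> A n" "cesaro_mean \<xi> A n \<le> 1"
proof -
  have b: "0 \<le> \<xi> j A" "\<xi> j A \<le> 1" for j using assms[of j] unfolding fa_outer_prob_def by auto
  have "0 \<le> (\<Sum>j<n. \<xi> j A)" using b by (simp add: sum_nonneg)
  then show "0 \<le> cesaro_mean \<xi> A n" unfolding cesaro_mean_def by simp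
  have "(\<Sum>j<n. \<xi> j A) \<le> real n" using sum_mono[of "{..<n}" "\<lambda>j. \<xi> j A" "\<lambda>_. 1"] b by simp
  then show "cesaro_mean \<xi> A n \<le> 1" unfolding cesaro_mean_def
    by (cases "n = 0") (auto simp: field_simps)
qed

lemma ereal_tau_eq_limsup:
  assumes "\<And>j. fa_outer_prob (\<xi> j)"
  shows "ereal (tau \<xi> A) = limsup (\<lambda>n. ereal (cesaro_mean \<xi> A n))"
proof -
  have "0 \<le> limsup (\<lambda>n. ereal (cesaro_mean \<xi> A n))"
    by (rule le_Limsup) (auto simp: cesaro_mean_bounds[of \<xi>, OF assms])
  moreover have "limsup (\<lambda>n. ereal (cesaro_mean \<xi> A n)) \<le> 1"
    by (rule Limsup_bounded) (auto simp: cesaro_mean_bounds[of \<xi>, OF assms])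
  ultimately show ?thesis
    unfolding tau_def cesaro_mean_def[symmetric] by (intro ereal_real') auto
qed

lemma tau_nonneg: assumes "\<And>j. fa_outer_prob (\<xi> j)" shows "0 \<le> tau \<xi> A"
proof -
  have "0 \<le> limsup (\<lambda>n. ereal (cesaro_mean \<xi> A n))"
    by (rule le_Limsup) (auto simp: cesaro_mean_bounds[of \<xi>, OF assms])
  then show ?thesis by (simp flip: ereal_tau_eq_limsup[of \<xi>, OF assms])
qed

lemma tau_mono:
  assumes "\<And>j. fa_outer_prob (\<xi> j)" "A \<subseteq> B" shows "tau \<xi> A \<le> tau \<xi> B"
proof -
  have "cesaro_mean \<xi> A n \<le> cesaro_mean \<xi> B n" for n
    unfolding cesaro_mean_def using fa_outer_prob_mono[OF assms(1) assms(2)]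
    by (intro mult_left_mono sum_mono) auto
  then have "limsup (\<lambda>n. ereal (cesaro_mean \<xi> A n)) \<le> limsup (\<lambda>n. ereal (cesaro_mean \<xi> B n))"
    by (intro Limsup_mono) auto
  then show ?thesis using ereal_tau_eq_limsup[of \<xi>, OF assms(1)] by (metis ereal_less_eq(3))
qed

lemma tau_Un_le:
  assumes "\<And>j. fa_outer_prob (\<xi> j)" shows "tau \<xi> (A \<union> B) \<le> tau \<xi> A + tau \<xi> B"
proof -
  have "cesaro_mean \<xi> (A \<union> B) n \<le> cesaro_mean \<xi> A n + cesaro_mean \<xi> B n" for n
  proof -
    have "(\<Sum>j<n. \<xi> j (A \<union> B)) \<le> (\<Sum>j<n. \<xi> j A + \<xi> j B)"
      using fa_outer_prob_Un_le[OF assms] by (intro sum_mono) auto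
    then show ?thesis unfolding cesaro_mean_def
      by (simp add: sum.distrib divide_right_mono flip: add_divide_distrib)
  qed
  then have "limsup (\<lambda>n. ereal (cesaro_mean \<xi> (A \<union> B) n))
      \<le> limsup (\<lambda>n. ereal (cesaro_mean \<xi> A n) + ereal (cesaro_mean \<xi> B n))"
    by (intro Limsup_mono) auto
  also have "\<dots> \<le> limsup (\<lambda>n. ereal (cesaro_mean \<xi> A n)) + limsup (\<lambda>n. ereal (cesaro_mean \<xi> B n))"
    by (rule ereal_limsup_add_mono)
  finally show ?thesis by (simp flip: ereal_tau_eq_limsup[of \<xi>, OF assms])
qed

lemma tau_empty: assumes "\<And>j. fa_outer_prob (\<xi> j)" shows "tau \<xi> {} = 0"
  unfolding tau_def by (simp add: fa_outer_prob_empty[OF assms] Limsup_const)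

lemma tau_Union_le:
  assumes "\<And>j. fa_outer_prob (\<xi> j)" "finite F"
  shows "tau \<xi> (\<Union>F) \<le> (\<Sum>I\<in>F. tau \<xi> I)"
  using assms(2)
proof (induction F rule: finite_induct)
  case empty
  then show ?case using tau_empty[of \<xi>, OF assms(1)] by simp
next
  case (insert I F)
  have "tau \<xi> (\<Union>(insert I F)) \<le> tau \<xi> I + tau \<xi> (\<Union>F)" using tau_Un_le[of \<xi>, OF assms(1)] by simp
  then show ?case using insert by simp
qed

lemma open_nbhd: "open (nbhd \<epsilon> K)"
proof -
  have "nbhd \<epsilon> K = (\<Union>k\<in>K. ball k \<epsilon>)" unfolding nbhd_def by (auto simp: dist_commute)
  then show ?thesis by auto
qed

lemma nbhd_mono: "\<epsilon> \<le> \<delta> \<Longrightarrow> nbhd \<epsilon> K \<subseteq> nbhd \<delta> K"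
  unfolding nbhd_def by force

lemma subset_nbhd: "\<epsilon> > 0 \<Longrightarrow> K \<subseteq> nbhd \<epsilon> K"
  unfolding nbhd_def by force

lemma compact_nbhd_subset_open:
  assumes "compact K" "open U" "K \<subseteq> U"
  obtains \<epsilon> where "\<epsilon> > 0" "nbhd \<epsilon> K \<subseteq> U"
proof -
  obtain \<epsilon> where "\<epsilon> > 0" and \<epsilon>: "\<And>x. x \<in> K \<Longrightarrow> \<exists>G\<in>{U}. ball x \<epsilon> \<subseteq> G"
    using Heine_Borel_lemma[OF assms(1), of "{U}"] assms(2,3) by auto
  moreover have "nbhd \<epsilon> K \<subseteq> U"
    unfolding nbhd_def using \<epsilon> by (force simp: dist_commute)
  ultimately show ?thesis using that by blast
qed

lemma diameter_ball_Int_le: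
  assumes "r > 0" shows "diameter (ball c (r/2) \<inter> S) \<le> r"
proof (cases "ball c (r/2) \<inter> S = {}")
  case True
  then show ?thesis using assms by simp
next
  case False
  have "dist x y \<le> r" if "x \<in> ball c (r/2)" "y \<in> ball c (r/2)" for x y
    using that dist_triangle[of x y c] by (auto simp: dist_commute)
  then show ?thesis unfolding diameter_def using False by (auto intro!: cSUP_least)
qed

lemma nu_r_le_finite_cover:
  assumes "\<And>j. fa_outer_prob (\<xi> j)" "finite \<I>"
    and "\<forall>I\<in>\<I>. open I \<and> diameter I \<le> r" "Y \<subseteq> \<Union>\<I>"
  shows "nu_r \<xi> r Y \<le> ennreal (\<Sum>I\<in>\<I>. tau \<xi> I)"
proof -
  have "nu_r \<xi> r Y \<le> (\<Sum>\<^sub>\<infinity> I\<in>\<I>. ennreal (tau \<xi> I))"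
    unfolding nu_r_def using assms(2-4)
    by (intro Inf_lower CollectI exI[of _ \<I>] conjI) (auto intro: countable_finite)
  also have "\<dots> = ennreal (\<Sum>I\<in>\<I>. tau \<xi> I)"
    using assms(2) tau_nonneg[of \<xi>, OF assms(1)] by simp
  finally show ?thesis .
qed

lemma nu_r_less_imp_finite_cover:
  assumes "\<And>j. fa_outer_prob (\<xi> j)" "compact K" "nu_r \<xi> r K < ennreal \<delta>"
  obtains F where "finite F" "\<forall>I\<in>F. open I" "K \<subseteq> \<Union>F" "(\<Sum>I\<in>F. tau \<xi> I) < \<delta>"
proof -
  obtain \<I> where \<I>: "\<forall>I\<in>\<I>. open I" "K \<subseteq> \<Union>\<I>"
    and less: "(\<Sum>\<^sub>\<infinity> I\<in>\<I>. ennreal (tau \<xi> I)) < ennreal \<delta>"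
    using assms(3) unfolding nu_r_def by (auto simp: Inf_less_iff)
  obtain F where F: "F \<subseteq> \<I>" "finite F" "K \<subseteq> \<Union>F"
    using compactE[OF assms(2) \<I>(2)] \<I>(1) by blast
  have "ennreal (\<Sum>I\<in>F. tau \<xi> I) = (\<Sum>\<^sub>\<infinity> I\<in>F. ennreal (tau \<xi> I))"
    using F(2) tau_nonneg[of \<xi>, OF assms(1)] by simp
  also have "\<dots> \<le> (\<Sum>\<^sub>\<infinity> I\<in>\<I>. ennreal (tau \<xi> I))"
    by (rule infsum_mono_neutral) (use F in \<open>auto intro: nonneg_summable_on_complete\<close>)
  finally have "ennreal (\<Sum>I\<in>F. tau \<xi> I) < ennreal \<delta>" using less by (rule le_less_trans)
  then have "(\<Sum>I\<in>F. tau \<xi> I) < \<delta>"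
    using tau_nonneg[of \<xi>, OF assms(1)] by (simp add: ennreal_less_iff sum_nonneg)
  then show ?thesis using that F \<I>(1) by blast
qed

lemma tendsto_tau_nbhd_if_nu_r_zero:
  assumes "\<And>j. fa_outer_prob (\<xi> j)" "compact K" "nu_r \<xi> r K = 0"
  shows "((\<lambda>\<epsilon>. tau \<xi> (nbhd \<epsilon> K)) \<longlongrightarrow> 0) (at_right 0)"
proof (rule tendstoI)
  fix \<delta> :: real assume "\<delta> > 0"
  then have "nu_r \<xi> r K < ennreal \<delta>" using assms(3) by simp
  then obtain F where F: "finite F" "\<forall>I\<in>F. open I" "K \<subseteq> \<Union>F" "(\<Sum>I\<in>F. tau \<xi> I) < \<delta>"
    using nu_r_less_imp_finite_cover[of \<xi>, OF assms(1,2)] by blast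
  obtain e where "e > 0" and e: "nbhd e K \<subseteq> \<Union>F"
    using compact_nbhd_subset_open[OF assms(2) _ F(3)] F(2) by blast
  have "tau \<xi> (nbhd \<epsilon> K) < \<delta>" if "\<epsilon> < e" for \<epsilon>
  proof -
    have "tau \<xi> (nbhd \<epsilon> K) \<le> tau \<xi> (\<Union>F)"
      using nbhd_mono[of \<epsilon> e K] that e by (intro tau_mono[of \<xi>, OF assms(1)]) auto
    also have "\<dots> \<le> (\<Sum>I\<in>F. tau \<xi> I)" using tau_Union_le[of \<xi>, OF assms(1) F(1)] .
    finally show ?thesis using F(4) by simp
  qed
  then show "\<forall>\<^sub>F \<epsilon> in at_right 0. dist (tau \<xi> (nbhd \<epsilon> K)) 0 < \<delta>"
    unfolding eventually_at_right_field using \<open>e > 0\<close> tau_nonneg[of \<xi>, OF assms(1)] by auto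
qed

lemma nu_r_le_tau_nbhd:
  assumes "\<And>j. fa_outer_prob (\<xi> j)" "compact K" "r > 0"
  obtains N :: nat where "\<And>\<epsilon>. \<epsilon> > 0 \<Longrightarrow> nu_r \<xi> r K \<le> ennreal (N * tau \<xi> (nbhd \<epsilon> K))"
proof -
  have cover: "K \<subseteq> (\<Union>c\<in>K. ball c (r/2))" using \<open>r > 0\<close> by auto
  obtain T where T: "finite T" "K \<subseteq> (\<Union>c\<in>T. ball c (r/2))"
    by (rule compactE_image[OF assms(2) _ cover]) auto
  have "nu_r \<xi> r K \<le> ennreal (card T * tau \<xi> (nbhd \<epsilon> K))" if "\<epsilon> > 0" for \<epsilon>
  proof -
    define \<I> where "\<I> = (\<lambda>c. ball c (r/2) \<inter> nbhd \<epsilon> K) ` T"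
    have "finite \<I>" unfolding \<I>_def using T(1) by simp
    moreover have "\<forall>I\<in>\<I>. open I \<and> diameter I \<le> r"
      unfolding \<I>_def using open_nbhd diameter_ball_Int_le[OF \<open>r > 0\<close>] by auto
    moreover have "K \<subseteq> \<Union>\<I>" using T(2) subset_nbhd[OF that, of K] unfolding \<I>_def by blast
    ultimately have "nu_r \<xi> r K \<le> ennreal (\<Sum>I\<in>\<I>. tau \<xi> I)"
      by (rule nu_r_le_finite_cover[of \<xi>, OF assms(1)])
    also have "\<dots> \<le> ennreal (\<Sum>c\<in>T. tau \<xi> (ball c (r/2) \<inter> nbhd \<epsilon> K))"
      unfolding \<I>_def using T(1) tau_nonneg[of \<xi>, OF assms(1)]
        sum_image_le[of T "tau \<xi>" "\<lambda>c. ball c (r/2) \<inter> nbhd \<epsilon> K"]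
      by (simp add: o_def ennreal_leI)
    also have "\<dots> \<le> ennreal (\<Sum>c\<in>T. tau \<xi> (nbhd \<epsilon> K))"
      by (intro ennreal_leI sum_mono tau_mono[of \<xi>, OF assms(1)]) auto
    finally show ?thesis by simp
  qed
  then show ?thesis by (rule that)
qed

lemma nu_r_zero_if_tendsto_tau_nbhd:
  assumes "\<And>j. fa_outer_prob (\<xi> j)" "compact K" "r > 0"
    and lim: "((\<lambda>\<epsilon>. tau \<xi> (nbhd \<epsilon> K)) \<longlongrightarrow> 0) (at_right 0)"
  shows "nu_r \<xi> r K = 0"
proof -
  obtain N :: nat where N: "\<And>\<epsilon>. \<epsilon> > 0 \<Longrightarrow> nu_r \<xi> r K \<le> ennreal (N * tau \<xi> (nbhd \<epsilon> K))"
    using nu_r_le_tau_nbhd[of \<xi>, OF assms(1-3)] by blast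
  have "nu_r \<xi> r K \<le> 0 + ennreal c" if "c > 0" for c
  proof -
    have "\<forall>\<^sub>F \<epsilon> in at_right 0. 0 < \<epsilon> \<and> tau \<xi> (nbhd \<epsilon> K) < c / (N + 1)"
      using that by (intro eventually_conj eventually_at_right_less order_tendstoD(2)[OF lim]) simp
    then obtain \<epsilon> where "\<epsilon> > 0" and small: "tau \<xi> (nbhd \<epsilon> K) < c / (N + 1)"
      using eventually_happens'[OF trivial_limit_at_right_real] by blast
    have "N * tau \<xi> (nbhd \<epsilon> K) \<le> N * (c / (N + 1))"
      using small by (intro mult_left_mono) auto
    also have "\<dots> \<le> c" using that by (simp add: field_simps)
    finally have "N * tau \<xi> (nbhd \<epsilon> K) \<le> c" .
    then show ?thesis using N[OF \<open>\<epsilon> > 0\<close>] by (simp add: order_trans ennreal_leI)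
  qed
  then have "nu_r \<xi> r K \<le> 0" by (rule ennreal_le_epsilon)
  then show ?thesis by simp
qed

theorem mainTheorem10:
  fixes \<xi> :: "nat \<Rightarrow> 'a::metric_space set \<Rightarrow> real" and K :: "'a set"
  assumes "compact (UNIV :: 'a set)"
    and "\<And>j. fa_outer_prob (\<xi> j)"
    and "compact K"
  shows "eta \<xi> K = 0 \<longleftrightarrow> ((\<lambda>\<epsilon>. tau \<xi> (nbhd \<epsilon> K)) \<longlongrightarrow> 0) (at_right 0)"
proof -
  have "K \<in> sets borel" using assms(3) compact_imp_closed borel_closed by auto
  then have "eta \<xi> K = 0 \<longleftrightarrow> (\<forall>r>0. nu_r \<xi> r K = 0)"
    unfolding eta_def nu_def by (auto simp flip: bot_ennreal)
  also have "\<dots> \<longleftrightarrow> ((\<lambda>\<epsilon>. tau \<xi> (nbhd \<epsilon> K)) \<longlongrightarrow> 0) (at_right 0)"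
    using tendsto_tau_nbhd_if_nu_r_zero[of \<xi> K 1, OF assms(2,3)]
      nu_r_zero_if_tendsto_tau_nbhd[of \<xi> K, OF assms(2,3)] by (meson zero_less_one)
  finally show ?thesis .
qed

end
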